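(* Let $M$ be an Orlicz function satisfying the $\Delta_2$-condition, differentiable on $(0,\infty)$ with $M'(x)>0$ for $x>0$, and such that for each $\varepsilon\in(0,1)$ the function $x\mapsto M'(\varepsilon x)/M'(x)$ is nonincreasing on $(0,\infty)$. Then the Orlicz space $L_M$ (with the Luxemburg norm) belongs to the class $\mathcal X$.
   Context: An Orlicz function is a continuous convex increasing $M:[0,\infty)\to[0,\infty)$ with $M(0)=0$, $M(u)\to\infty$ as $u\to\infty$; $M\in\Delta_2$ means $M(2u)\le CM(u)$ for all $u>0$ and some $C>0$. $L_M$ on $(0,\infty)$ has the Luxemburg norm $\|f\|_{L_M}=\inf\{\lambda>0:\int_0^\infty M(|f(s)|/\lambda)ds\le1\}$. $f^*$ denotes the nonincreasing rearrangement. A pair $(f,g)$ satisfies the NP condition if there is $t_0>0$ with $f^*(t)\ge g^*(t)$ for $t\le t_0$ and $f^*(t)\le g^*(t)$ for $t\ge t_0$. $\mathcal X$ is the class of all rearrangement invariant spaces $X$ on $(0,\infty)$ such that for every pair $(f,g)$ with $f,g\in X$ satisfying the NP condition and $\|f\|_X\ge\|g\|_X$, one has $\|f^*\chi_{(0,s)}\|_X\ge\|g^*\chi_{(0,s)}\|_X$ for all $s>0$. *)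

theory Defs
  imports "HOL-Analysis.Analysis"
begin

text \<open>Functions on (0,\<infinity>) are represented as real \<Rightarrow> real; only values on {0<..} matter.
  The underlying measure is Lebesgue measure restricted to {0<..}.\<close>

definition orlicz_function :: "(real \<Rightarrow> real) \<Rightarrow> bool" where
  "orlicz_function M \<longleftrightarrow>
     continuous_on {0..} M \<and> convex_on {0..} M \<and> mono_on {0..} M \<and>
     (\<forall>u\<ge>0. M u \<ge> 0) \<and> M 0 = 0 \<and> filterlim M at_top at_top"

definition delta2 :: "(real \<Rightarrow> real) \<Rightarrow> bool" where
  "delta2 M \<longleftrightarrow> (\<exists>C>0. \<forall>u>0. M (2 * u) \<le> C * M u)"

definition orlicz_modular :: "(real \<Rightarrow> real) \<Rightarrow> real \<Rightarrow> (real \<Rightarrow> real) \<Rightarrow> ennreal" where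
  "orlicz_modular M c f = (\<integral>\<^sup>+ s\<in>{0<..}. ennreal (M (\<bar>f s\<bar> / c)) \<partial>lebesgue)"

definition orlicz_space :: "(real \<Rightarrow> real) \<Rightarrow> (real \<Rightarrow> real) set" where
  "orlicz_space M = {f. f \<in> borel_measurable lebesgue \<and>
       (\<exists>c>0. orlicz_modular M c f < \<infinity>)}"

definition luxemburg_norm :: "(real \<Rightarrow> real) \<Rightarrow> (real \<Rightarrow> real) \<Rightarrow> real" where
  "luxemburg_norm M f = Inf {c. c > 0 \<and> orlicz_modular M c f \<le> 1}"

definition distrib_fun :: "(real \<Rightarrow> real) \<Rightarrow> real \<Rightarrow> ennreal" where
  "distrib_fun f c = emeasure lebesgue {s \<in> {0<..}. \<bar>f s\<bar> > c}"

definition rearr :: "(real \<Rightarrow> real) \<Rightarrow> real \<Rightarrow> real" where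
  "rearr f t = Inf {c. c \<ge> 0 \<and> distrib_fun f c \<le> ennreal t}"

definition rearr_trunc :: "(real \<Rightarrow> real) \<Rightarrow> real \<Rightarrow> real \<Rightarrow> real" where
  "rearr_trunc f s t = (if t < s then rearr f t else 0)"

definition NP_condition :: "(real \<Rightarrow> real) \<Rightarrow> (real \<Rightarrow> real) \<Rightarrow> bool" where
  "NP_condition f g \<longleftrightarrow> (\<exists>t0>0. \<forall>t>0.
      (t \<le> t0 \<longrightarrow> rearr f t \<ge> rearr g t) \<and> (t \<ge> t0 \<longrightarrow> rearr f t \<le> rearr g t))"

definition class_X :: "(real \<Rightarrow> real) set \<Rightarrow> ((real \<Rightarrow> real) \<Rightarrow> real) \<Rightarrow> bool" where
  "class_X X nX \<longleftrightarrow> (\<forall>f g. f \<in> X \<and> g \<in> X \<and> NP_condition f g \<and> nX f \<ge> nX g \<longrightarrow>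
       (\<forall>s>0. nX (rearr_trunc f s) \<ge> nX (rearr_trunc g s)))"

end

theory Submission
  imports Defs
begin

text \<open>Suppose the truncated norms were in the wrong order; choose c1 strictly between them and
  put c2 = ||g|| > c1, e = c1/c2.  Let W = g^*(t0)/c1, where t0 is the crossing point of the NP
  condition, and choose K such that the derivative of psi(x) = M(e x) - K M(x) vanishes at W.
  The ratio condition on M' makes psi increase on [0,W] and decrease on [W,oo).  For t <= t0 we
  have W <= g^*(t)/c1 <= f^*(t)/c1 and for t > t0 we have f^*(t)/c1 <= g^*(t)/c1 <= W, so in both
  cases psi(f^*/c1) <= psi(g^*/c1) on (0,s), while f^* <= g^* beyond s.  Integrating,
    rho_c2(f^*) + K rho_c1(g^* chi_(0,s)) <= rho_c2(g^*) + K rho_c1(f^* chi_(0,s)),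
  and since the truncated modulars are <= 1 and > 1 respectively, rho_c2(f) < rho_c2(g) <= 1,
  i.e. ||f|| < ||g||, a contradiction.  A function and its rearrangement have the same
  modular by the layer cake formula.\<close>

lemma sigma_finite_lebesgue: "sigma_finite_measure (lebesgue :: real measure)"
  unfolding sigma_finite_measure_def
proof (rule exI[where x="range (\<lambda>n::nat. {-real n..real n})"], intro conjI)
  show "\<Union> (range (\<lambda>n::nat. {-real n..real n})) = space lebesgue"
  proof auto
    fix x :: real
    obtain n :: nat where "\<bar>x\<bar> \<le> real n" using real_arch_simple by blast
    then show "\<exists>n. - real n \<le> x \<and> x \<le> real n" by (intro exI[of _ n]) auto
  qed
qed auto

interpretation lebesgue: sigma_finite_measure "lebesgue :: real measure"
  by (rule sigma_finite_lebesgue)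

lemma (in sigma_finite_measure) nn_integral_layer_cake:
  fixes g :: "'a \<Rightarrow> real"
  assumes [measurable]: "g \<in> borel_measurable M" "S \<in> sets M"
  shows "(\<integral>\<^sup>+x\<in>S. ennreal (g x) \<partial>M) = (\<integral>\<^sup>+y\<in>{0<..}. emeasure M {x\<in>S. y < g x} \<partial>lborel)"
proof -
  interpret P: pair_sigma_finite M lborel ..
  define F where "F x y = (indicator {(x, y). x \<in> S \<and> 0 < y \<and> y < g x} (x, y) :: ennreal)" for x y
  have F_measurable: "case_prod F \<in> borel_measurable (M \<Otimes>\<^sub>M lborel)"
    unfolding F_def by measurable
  have inner_y: "ennreal (g x) * indicator S x = (\<integral>\<^sup>+y. F x y \<partial>lborel)" for x
  proof (cases "x \<in> S \<and> 0 < g x")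
    case True
    then have "(\<integral>\<^sup>+y. F x y \<partial>lborel) = (\<integral>\<^sup>+y. indicator {0<..<g x} y \<partial>lborel)"
      unfolding F_def by (auto intro!: nn_integral_cong simp: indicator_def)
    then show ?thesis using True by simp
  next
    case False
    then have "F x = (\<lambda>_. 0)" unfolding F_def by (auto simp: fun_eq_iff indicator_def)
    then show ?thesis using False by (auto simp: indicator_def ennreal_eq_0_iff)
  qed
  have inner_x: "emeasure M {x\<in>S. y < g x} * indicator {0<..} y = (\<integral>\<^sup>+x. F x y \<partial>M)" for y
  proof (cases "0 < y")
    case True
    then have "(\<lambda>x. F x y) = indicator {x\<in>S. y < g x}"
      unfolding F_def by (auto simp: fun_eq_iff indicator_def)
    then show ?thesis using True by simp
  next
    case False
    then show ?thesis unfolding F_def by (simp add: indicator_def)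
  qed
  show ?thesis
    unfolding nn_integral_cong[OF inner_y] nn_integral_cong[OF inner_x]
    using P.Fubini'[OF F_measurable] by simp
qed

lemma ennreal_less_of_add_mult_le:
  fixes X Y P Q :: ennreal
  assumes le: "X + ennreal k * Q \<le> Y + ennreal k * P" and "P \<le> 1" "1 < Q"
    and "Y < \<infinity>" "Q < \<infinity>" "0 < k"
  shows "X < Y"
proof -
  obtain p where p: "P = ennreal p" "0 \<le> p" "p \<le> 1"
    using assms by (cases P) (auto simp: top_unique)
  obtain q where q: "Q = ennreal q" "1 < q" using assms by (cases Q) auto
  obtain y where y: "Y = ennreal y" "0 \<le> y" using assms by (cases Y) auto
  have "Y + ennreal k * P < \<infinity>" using y p \<open>0 < k\<close> by (simp add: ennreal_mult_less_top)
  then have "X + ennreal k * Q < \<infinity>" using le by (rule le_less_trans[rotated])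
  then have "X < \<infinity>" by (simp add: top_unique)
  then obtain x where x: "X = ennreal x" "0 \<le> x" by (cases X) auto
  have "ennreal (x + k * q) \<le> ennreal (y + k * p)"
    using le x y p q \<open>0 < k\<close>
    by (simp add: ennreal_mult[symmetric] ennreal_plus[symmetric] del: ennreal_plus)
  then have "x + k * q \<le> y + k * p" using y p \<open>0 < k\<close> by (subst (asm) ennreal_le_iff) auto
  then have "x < y" using p q \<open>0 < k\<close> by (smt (verit) mult_strict_left_mono)
  then show ?thesis using x y by (simp add: ennreal_less_iff)
qed

lemma sets_lebesgue_Ioi[measurable]: "{0<..} \<in> sets (lebesgue :: real measure)"
  by simp

text \<open>This makes the infimum defining \<open>rearr f t\<close> range over a nonempty set for every \<open>t > 0\<close>,
  so that the rearrangement is a genuine finite function there.\<close>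

definition finite_distrib :: "(real \<Rightarrow> real) \<Rightarrow> bool" where
  "finite_distrib f \<longleftrightarrow> f \<in> borel_measurable lebesgue \<and> (\<forall>l>0. distrib_fun f l < \<infinity>)"

lemma distrib_fun_set_measurable[measurable]:
  fixes f :: "real \<Rightarrow> real"
  assumes "f \<in> borel_measurable lebesgue"
  shows "{s\<in>{0<..}. l < \<bar>f s\<bar>} \<in> sets lebesgue"
  using assms by measurable

lemma distrib_fun_antimono:
  assumes "f \<in> borel_measurable lebesgue" "l \<le> l'"
  shows "distrib_fun f l' \<le> distrib_fun f l"
  unfolding distrib_fun_def
  by (rule emeasure_mono) (use distrib_fun_set_measurable[OF assms(1), of l] assms in auto)

lemma distrib_fun_right_continuous:
  assumes f: "f \<in> borel_measurable lebesgue" and less: "ennreal t < distrib_fun f l"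
  shows "\<exists>e>0. ennreal t < distrib_fun f (l + e)"
proof -
  define A where "A n = {s\<in>{0<..}. l + 1 / real (Suc n) < \<bar>f s\<bar>}" for n
  have "range A \<subseteq> sets lebesgue"
  proof safe
    fix n show "A n \<in> sets lebesgue" unfolding A_def using f by measurable
  qed
  moreover have "incseq A"
  proof (rule incseq_SucI)
    fix n
    have "1 / real (Suc (Suc n)) \<le> 1 / real (Suc n)" by (simp add: frac_le)
    then show "A n \<subseteq> A (Suc n)" unfolding A_def by auto
  qed
  moreover have "\<Union> (range A) = {s\<in>{0<..}. l < \<bar>f s\<bar>}"
  proof (intro set_eqI iffI)
    fix x assume x: "x \<in> {s\<in>{0<..}. l < \<bar>f s\<bar>}"
    then obtain n where "inverse (real (Suc n)) < \<bar>f x\<bar> - l"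
      using reals_Archimedean[of "\<bar>f x\<bar> - l"] by auto
    then have "x \<in> A n" using x unfolding A_def by (simp add: inverse_eq_divide)
    then show "x \<in> \<Union> (range A)" by blast
  next
    fix x assume "x \<in> \<Union> (range A)"
    then obtain n where "0 < x" "l + 1 / real (Suc n) < \<bar>f x\<bar>" unfolding A_def by blast
    moreover have "0 < 1 / real (Suc n)" by simp
    ultimately have "0 < x" "l < \<bar>f x\<bar>" by linarith+
    then show "x \<in> {s\<in>{0<..}. l < \<bar>f s\<bar>}" by simp
  qed
  ultimately have "distrib_fun f l = (SUP n. emeasure lebesgue (A n))"
    unfolding distrib_fun_def using SUP_emeasure_incseq[of A lebesgue] by simp
  then obtain n where "ennreal t < emeasure lebesgue (A n)"
    using less by (auto simp: less_SUP_iff)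
  then have "ennreal t < distrib_fun f (l + 1 / real (Suc n))"
    unfolding distrib_fun_def A_def by simp
  then show ?thesis by (intro exI[of _ "1 / real (Suc n)"]) auto
qed

lemma distrib_fun_small:
  assumes f: "finite_distrib f" and "0 < t"
  shows "\<exists>c\<ge>0. distrib_fun f c \<le> ennreal t"
proof -
  have meas: "f \<in> borel_measurable lebesgue" using f by (simp add: finite_distrib_def)
  define A where "A n = {s\<in>{0<..}. real (Suc n) < \<bar>f s\<bar>}" for n
  have "(INF n. emeasure lebesgue (A n)) = emeasure lebesgue (\<Inter> (range A))"
  proof (rule INF_emeasure_decseq')
    show "A n \<in> sets lebesgue" for n unfolding A_def using meas by measurable
    show "decseq A"
    proof (rule monotone_onI)
      fix m n :: nat assume "m \<le> n"
      then have "real (Suc m) \<le> real (Suc n)" by simp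
      then show "A n \<le> A m" unfolding A_def by auto
    qed
    have "distrib_fun f 1 < \<infinity>" using f by (simp add: finite_distrib_def)
    then show "\<exists>n. emeasure lebesgue (A n) \<noteq> \<infinity>"
      unfolding distrib_fun_def A_def by (intro exI[of _ 0]) simp
  qed
  moreover have "\<Inter> (range A) = {}"
  proof (rule equals0I)
    fix x assume x: "x \<in> \<Inter> (range A)"
    obtain n :: nat where n: "\<bar>f x\<bar> < real n" using reals_Archimedean2 by blast
    have "x \<in> A n" using x by blast
    then show False using n unfolding A_def by simp
  qed
  ultimately have "(INF n. distrib_fun f (real (Suc n))) = 0" unfolding distrib_fun_def A_def by simp
  then have "(INF n. distrib_fun f (real (Suc n))) < ennreal t" using \<open>0 < t\<close> by simp
  then obtain n where "distrib_fun f (real (Suc n)) < ennreal t" by (auto simp: INF_less_iff)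
  then show ?thesis by (intro exI[of _ "real (Suc n)"]) auto
qed

lemma rearr_set_nonempty:
  "finite_distrib f \<Longrightarrow> 0 < t \<Longrightarrow> {c. 0 \<le> c \<and> distrib_fun f c \<le> ennreal t} \<noteq> {}"
  using distrib_fun_small by blast

lemma rearr_nonneg: "finite_distrib f \<Longrightarrow> 0 < t \<Longrightarrow> 0 \<le> rearr f t"
  unfolding rearr_def using rearr_set_nonempty by (intro cInf_greatest) auto

lemma rearr_antimono:
  assumes "finite_distrib f" "0 < t" "t \<le> t'"
  shows "rearr f t' \<le> rearr f t"
  unfolding rearr_def
  by (rule cInf_superset_mono[OF rearr_set_nonempty[OF assms(1,2)] bdd_belowI[of _ 0]])
    (use assms(2,3) in \<open>auto intro: order_trans ennreal_leI\<close>)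

lemma rearr_const_nonpos: "t \<le> 0 \<Longrightarrow> t' \<le> 0 \<Longrightarrow> rearr f t = rearr f t'"
  unfolding rearr_def by (simp add: ennreal_neg)

lemma less_rearr_iff:
  assumes f: "finite_distrib f" and "0 < l" "0 < t"
  shows "l < rearr f t \<longleftrightarrow> ennreal t < distrib_fun f l"
proof
  assume "ennreal t < distrib_fun f l"
  then obtain e where e: "0 < e" "ennreal t < distrib_fun f (l + e)"
    using distrib_fun_right_continuous[of f t l] f unfolding finite_distrib_def by blast
  have "l + e \<le> rearr f t"
    unfolding rearr_def
  proof (rule cInf_greatest[OF rearr_set_nonempty[OF f \<open>0 < t\<close>]])
    fix c assume c: "c \<in> {c. 0 \<le> c \<and> distrib_fun f c \<le> ennreal t}"
    show "l + e \<le> c"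
    proof (rule ccontr)
      assume "\<not> l + e \<le> c"
      then have "distrib_fun f (l + e) \<le> distrib_fun f c"
        using f by (intro distrib_fun_antimono) (auto simp: finite_distrib_def)
      then show False using c e by auto
    qed
  qed
  then show "l < rearr f t" using e by simp
next
  assume "l < rearr f t"
  show "ennreal t < distrib_fun f l"
  proof (rule ccontr)
    assume "\<not> ?thesis"
    then have "rearr f t \<le> l"
      unfolding rearr_def using \<open>0 < l\<close> by (intro cInf_lower bdd_belowI[of _ 0]) auto
    then show False using \<open>l < rearr f t\<close> by simp
  qed
qed

lemma distrib_fun_rearr:
  assumes f: "finite_distrib f" and l: "0 < l"
  shows "distrib_fun (rearr f) l = distrib_fun f l"
proof -
  obtain r where r: "distrib_fun f l = ennreal r" "0 \<le> r"
    using f l unfolding finite_distrib_def by (cases "distrib_fun f l") auto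
  have "{t\<in>{0<..}. l < \<bar>rearr f t\<bar>} = {0<..<r}"
    using less_rearr_iff[OF f l] rearr_nonneg[OF f] r by (auto simp: ennreal_less_iff)
  then have "distrib_fun (rearr f) l = ennreal r" unfolding distrib_fun_def using r by simp
  with r show ?thesis by simp
qed

lemma rearr_measurable:
  assumes f: "finite_distrib f"
  shows "rearr f \<in> borel_measurable lebesgue"
proof -
  have "(\<lambda>t. - rearr f t) \<in> borel_measurable borel"
  proof (rule borel_measurable_piecewise_mono[of "{{..0}, {0<..}}"])
    have "mono_on {..0} (\<lambda>t. - rearr f t)"
      by (intro monotone_onI) (metis rearr_const_nonpos atMost_iff order_refl)
    moreover have "mono_on {0<..} (\<lambda>t. - rearr f t)"
      by (intro monotone_onI) (auto intro: rearr_antimono[OF f])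
    moreover fix C assume "C \<in> {{..0::real}, {0<..}}"
    ultimately show "mono_on C (\<lambda>t. - rearr f t)" by blast
  qed auto
  then have "(\<lambda>t. - (- rearr f t)) \<in> borel_measurable borel" by (rule borel_measurable_uminus)
  then have "rearr f \<in> borel_measurable lborel" by simp
  then show ?thesis by (rule measurable_completion)
qed

lemma rearr_trunc_measurable:
  assumes "finite_distrib f"
  shows "rearr_trunc f s \<in> borel_measurable lebesgue"
proof -
  note rearr_measurable[OF assms, measurable]
  have [measurable]: "(\<lambda>t::real. t) \<in> borel_measurable lebesgue"
    using id_borel_measurable_lebesgue by (simp add: id_def)
  show ?thesis unfolding rearr_trunc_def by measurable
qed

locale orlicz =
  fixes M :: "real \<Rightarrow> real"
  assumes orlicz: "orlicz_function M" and delta2: "delta2 M"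
    and M_pos: "\<And>u. 0 < u \<Longrightarrow> 0 < M u"
begin

abbreviation \<rho> :: "real \<Rightarrow> (real \<Rightarrow> real) \<Rightarrow> ennreal" where
  "\<rho> c h \<equiv> orlicz_modular M c h"

abbreviation lux :: "(real \<Rightarrow> real) \<Rightarrow> real" where
  "lux h \<equiv> luxemburg_norm M h"

lemma M_continuous: "continuous_on {0..} M" and M_convex: "convex_on {0..} M"
  and M_mono: "mono_on {0..} M" and M_zero: "M 0 = 0" and M_at_top: "filterlim M at_top at_top"
  using orlicz by (auto simp: orlicz_function_def)

lemma M_le: "0 \<le> x \<Longrightarrow> x \<le> y \<Longrightarrow> M x \<le> M y"
  using M_mono by (auto simp: mono_on_def)

lemma M_nonneg: "0 \<le> x \<Longrightarrow> 0 \<le> M x"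
  using M_le[of 0 x] M_zero by simp

lemma M_convex_comb:
  "0 \<le> t \<Longrightarrow> t \<le> 1 \<Longrightarrow> 0 \<le> x \<Longrightarrow> 0 \<le> y \<Longrightarrow> M ((1 - t) * x + t * y) \<le> (1 - t) * M x + t * M y"
  using convex_onD[OF M_convex, of t x y] by simp

lemma M_less:
  assumes "0 \<le> x" "x < y"
  shows "M x < M y"
proof -
  have "M x = M ((1 - x / y) * 0 + (x / y) * y)" using assms by simp
  also have "\<dots> \<le> (x / y) * M y"
    using M_convex_comb[of "x / y" 0 y] assms M_zero by simp
  also have "\<dots> < M y"
    using mult_strict_right_mono[of "x / y" 1 "M y"] assms M_pos[of y] by simp
  finally show ?thesis .
qed

lemma M_less_iff: "0 \<le> x \<Longrightarrow> 0 \<le> y \<Longrightarrow> M x < M y \<longleftrightarrow> x < y"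
  using M_less M_le by (metis not_less)

lemma M_half: "0 \<le> x \<Longrightarrow> 2 * M (x / 2) \<le> M x"
  using M_convex_comb[of "1/2" x 0] M_zero by simp

lemma delta2_const:
  obtains C where "1 \<le> C" "\<And>x. 0 \<le> x \<Longrightarrow> M (2 * x) \<le> C * M x"
proof -
  obtain C where C: "0 < C" "\<And>u. 0 < u \<Longrightarrow> M (2 * u) \<le> C * M u"
    using delta2 by (auto simp: delta2_def)
  have "M (2 * x) \<le> (C + 1) * M x" if "0 \<le> x" for x
  proof (cases "x = 0")
    case False
    then show ?thesis using C(2)[of x] M_nonneg[of x] that by (simp add: algebra_simps)
  qed (simp add: M_zero)
  then show ?thesis using that[of "C + 1"] C by simp
qed

lemma M_scale_le:
  assumes C: "\<And>x. 0 \<le> x \<Longrightarrow> M (2 * x) \<le> C * M x" and "0 \<le> \<theta>" "\<theta> \<le> 1" "0 \<le> x"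
  shows "M ((1 + \<theta>) * x) \<le> (1 + \<theta> * (C - 1)) * M x"
proof -
  have "M ((1 + \<theta>) * x) = M ((1 - \<theta>) * x + \<theta> * (2 * x))" by (simp add: algebra_simps)
  also have "\<dots> \<le> (1 - \<theta>) * M x + \<theta> * M (2 * x)" using assms by (intro M_convex_comb) auto
  also have "\<dots> \<le> (1 - \<theta>) * M x + \<theta> * (C * M x)"
    using assms by (intro add_left_mono mult_left_mono) auto
  also have "\<dots> = (1 + \<theta> * (C - 1)) * M x" by (simp add: algebra_simps)
  finally show ?thesis .
qed

lemma M_surj:
  assumes "0 < y"
  obtains a where "0 < a" "M a = y"
proof -
  obtain N where N: "\<And>x. N \<le> x \<Longrightarrow> y < M x"
    using M_at_top by (auto simp: filterlim_at_top_dense eventually_at_top_linorder)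
  define b where "b = max N 0"
  have "0 \<le> b" "y < M b" using N[of b] unfolding b_def by auto
  moreover have "continuous_on {0..b} M" using M_continuous by (rule continuous_on_subset) auto
  ultimately obtain a where "0 \<le> a" "M a = y"
    using IVT'[of M 0 y b] M_zero assms by auto
  moreover have "a \<noteq> 0" using \<open>M a = y\<close> M_zero assms by auto
  ultimately show ?thesis using that[of a] by auto
qed

lemma M_measurable[measurable]:
  fixes h :: "real \<Rightarrow> real"
  assumes "h \<in> borel_measurable lebesgue" "0 < c"
  shows "(\<lambda>x. M (\<bar>h x\<bar> / c)) \<in> borel_measurable lebesgue"
proof -
  have "continuous_on UNIV (\<lambda>z. M (max z 0))"
    by (rule continuous_on_compose2[OF M_continuous]) (auto intro!: continuous_intros)
  then have "(\<lambda>x. M (max (\<bar>h x\<bar> / c) 0)) \<in> borel_measurable lebesgue"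
    by (rule borel_measurable_continuous_on) (use assms in measurable)
  moreover have "max (\<bar>h x\<bar> / c) 0 = \<bar>h x\<bar> / c" for x using assms by auto
  ultimately show ?thesis by simp
qed

lemma modular_integrand_measurable:
  fixes h :: "real \<Rightarrow> real"
  assumes "h \<in> borel_measurable lebesgue" "0 < c"
  shows "(\<lambda>x. ennreal (M (\<bar>h x\<bar> / c)) * indicator {0<..} x) \<in> borel_measurable lebesgue"
  using assms by measurable

lemma modular_antimono:
  assumes "0 < c" "c \<le> c'"
  shows "\<rho> c' h \<le> \<rho> c h"
  unfolding orlicz_modular_def
proof (intro nn_integral_mono mult_right_mono ennreal_leI)
  fix x
  have "\<bar>h x\<bar> / c' \<le> \<bar>h x\<bar> / c" using assms by (intro divide_left_mono) auto
  then show "M (\<bar>h x\<bar> / c') \<le> M (\<bar>h x\<bar> / c)" using assms by (intro M_le) auto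
qed simp

lemma modular_mono:
  assumes "0 < c" "\<And>x. 0 < x \<Longrightarrow> \<bar>h x\<bar> \<le> \<bar>k x\<bar>"
  shows "\<rho> c h \<le> \<rho> c k"
  unfolding orlicz_modular_def
proof (intro nn_integral_mono)
  fix x
  show "ennreal (M (\<bar>h x\<bar> / c)) * indicator {0<..} x \<le> ennreal (M (\<bar>k x\<bar> / c)) * indicator {0<..} x"
  proof (cases "0 < x")
    case True
    then have "M (\<bar>h x\<bar> / c) \<le> M (\<bar>k x\<bar> / c)" using assms by (intro M_le divide_right_mono) auto
    then show ?thesis by (intro mult_right_mono ennreal_leI) auto
  qed simp
qed

lemma modular_scale_le:
  fixes h :: "real \<Rightarrow> real"
  assumes h: "h \<in> borel_measurable lebesgue" and "0 < c" "0 < a" "0 \<le> K"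
    and MK: "\<And>z. 0 \<le> z \<Longrightarrow> M (a * z) \<le> K * M z"
  shows "\<rho> (c / a) h \<le> ennreal K * \<rho> c h"
proof -
  have "ennreal (M (\<bar>h x\<bar> / (c / a))) \<le> ennreal K * ennreal (M (\<bar>h x\<bar> / c))" for x
  proof -
    have "M (\<bar>h x\<bar> / (c / a)) = M (a * (\<bar>h x\<bar> / c))" using assms by (simp add: field_simps)
    also have "\<dots> \<le> K * M (\<bar>h x\<bar> / c)" using assms by (intro MK) auto
    finally show ?thesis using assms by (simp add: ennreal_mult[symmetric] M_nonneg ennreal_leI)
  qed
  then have "\<rho> (c / a) h \<le> (\<integral>\<^sup>+x. ennreal K * (ennreal (M (\<bar>h x\<bar> / c)) * indicator {0<..} x) \<partial>lebesgue)"
    unfolding orlicz_modular_def by (intro nn_integral_mono) (auto simp: indicator_def)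
  also have "\<dots> = ennreal K * \<rho> c h"
    unfolding orlicz_modular_def using assms by (intro nn_integral_cmult modular_integrand_measurable)
  finally show ?thesis .
qed

lemma modular_finite_of_finite:
  fixes h :: "real \<Rightarrow> real"
  assumes h: "h \<in> borel_measurable lebesgue" and "0 < c\<^sub>0" "\<rho> c\<^sub>0 h < \<infinity>" and "0 < c"
  shows "\<rho> c h < \<infinity>"
proof -
  obtain C where C: "1 \<le> C" "\<And>x. 0 \<le> x \<Longrightarrow> M (2 * x) \<le> C * M x"
    using delta2_const by blast
  have power_bound: "\<rho> (c\<^sub>0 / 2 ^ k) h \<le> ennreal (C ^ k) * \<rho> c\<^sub>0 h" for k
  proof (induction k)
    case (Suc k)
    have "\<rho> (c\<^sub>0 / 2 ^ Suc k) h = \<rho> ((c\<^sub>0 / 2 ^ k) / 2) h" by (simp add: field_simps)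
    also have "\<dots> \<le> ennreal C * \<rho> (c\<^sub>0 / 2 ^ k) h"
      using assms C by (intro modular_scale_le) auto
    also have "\<dots> \<le> ennreal C * (ennreal (C ^ k) * \<rho> c\<^sub>0 h)" using Suc by (intro mult_left_mono) auto
    also have "\<dots> = (ennreal C * ennreal (C ^ k)) * \<rho> c\<^sub>0 h" by (simp only: mult.assoc)
    also have "ennreal C * ennreal (C ^ k) = ennreal (C ^ Suc k)"
      using C(1) by (subst ennreal_mult[symmetric]) auto
    finally show ?case .
  qed simp
  obtain k where "c\<^sub>0 / c < 2 ^ k" using real_arch_pow[of 2 "c\<^sub>0 / c"] by auto
  then have "c\<^sub>0 / 2 ^ k < c" using assms by (simp add: field_simps)
  then have "\<rho> c h \<le> \<rho> (c\<^sub>0 / 2 ^ k) h" using assms by (intro modular_antimono) auto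
  also have "\<dots> \<le> ennreal (C ^ k) * \<rho> c\<^sub>0 h" by (rule power_bound)
  also have "\<dots> < \<infinity>" using assms by (simp add: ennreal_mult_less_top)
  finally show ?thesis .
qed

lemma modular_le_one_exists:
  fixes h :: "real \<Rightarrow> real"
  assumes h: "h \<in> borel_measurable lebesgue" and "0 < c\<^sub>0" "\<rho> c\<^sub>0 h < \<infinity>"
  shows "\<exists>c>0. \<rho> c h \<le> 1"
proof -
  have power_bound: "\<rho> (c\<^sub>0 * 2 ^ k) h \<le> ennreal ((1/2) ^ k) * \<rho> c\<^sub>0 h" for k
  proof (induction k)
    case (Suc k)
    have "\<rho> (c\<^sub>0 * 2 ^ Suc k) h = \<rho> ((c\<^sub>0 * 2 ^ k) / (1/2)) h" by (simp add: field_simps)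
    also have "\<dots> \<le> ennreal (1/2) * \<rho> (c\<^sub>0 * 2 ^ k) h"
      using assms M_half by (intro modular_scale_le) (auto simp: field_simps)
    also have "\<dots> \<le> ennreal (1/2) * (ennreal ((1/2) ^ k) * \<rho> c\<^sub>0 h)"
      using Suc by (intro mult_left_mono) auto
    also have "\<dots> = (ennreal (1/2) * ennreal ((1/2) ^ k)) * \<rho> c\<^sub>0 h" by (simp only: mult.assoc)
    also have "ennreal (1/2) * ennreal ((1/2) ^ k) = ennreal ((1/2) ^ Suc k)"
      by (subst ennreal_mult[symmetric]) auto
    finally show ?case .
  qed simp
  obtain r where r: "\<rho> c\<^sub>0 h = ennreal r" "0 \<le> r" using assms by (cases "\<rho> c\<^sub>0 h") auto
  obtain k where k: "r < 2 ^ k" using real_arch_pow[of 2 r] by auto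
  have "ennreal ((1/2) ^ k) * \<rho> c\<^sub>0 h = ennreal ((1/2) ^ k * r)" using r by (simp add: ennreal_mult)
  also have "\<dots> \<le> 1" using k by (simp add: power_divide field_simps)
  finally show ?thesis using power_bound[of k] assms by (intro exI[of _ "c\<^sub>0 * 2 ^ k"]) auto
qed

lemma modular_grow:
  fixes h :: "real \<Rightarrow> real"
  assumes "h \<in> borel_measurable lebesgue" "0 < c" "0 \<le> \<theta>" "\<theta> \<le> 1"
    and C: "1 \<le> C" "\<And>x. 0 \<le> x \<Longrightarrow> M (2 * x) \<le> C * M x"
  shows "\<rho> (c / (1 + \<theta>)) h \<le> ennreal (1 + \<theta> * (C - 1)) * \<rho> c h"
  using assms by (intro modular_scale_le M_scale_le[OF C(2)]) auto

lemma orlicz_space_measurable: "f \<in> orlicz_space M \<Longrightarrow> f \<in> borel_measurable lebesgue"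
  by (simp add: orlicz_space_def)

lemma orlicz_space_modular_finite: "f \<in> orlicz_space M \<Longrightarrow> 0 < c \<Longrightarrow> \<rho> c f < \<infinity>"
  unfolding orlicz_space_def using modular_finite_of_finite by blast

lemma orlicz_spaceI: "f \<in> borel_measurable lebesgue \<Longrightarrow> 0 < c \<Longrightarrow> \<rho> c f < \<infinity> \<Longrightarrow> f \<in> orlicz_space M"
  unfolding orlicz_space_def by blast

lemma luxemburg_set_nonempty: "f \<in> orlicz_space M \<Longrightarrow> {c. 0 < c \<and> \<rho> c f \<le> 1} \<noteq> {}"
  unfolding orlicz_space_def using modular_le_one_exists by blast

lemma lux_nonneg: "f \<in> orlicz_space M \<Longrightarrow> 0 \<le> lux f"
  unfolding luxemburg_norm_def using luxemburg_set_nonempty by (intro cInf_greatest) auto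

lemma lux_le_of_modular_le_one: "0 < c \<Longrightarrow> \<rho> c h \<le> 1 \<Longrightarrow> lux h \<le> c"
  unfolding luxemburg_norm_def by (intro cInf_lower bdd_belowI[of _ 0]) auto

lemma one_less_modular_of_less_lux: "0 < c \<Longrightarrow> c < lux h \<Longrightarrow> 1 < \<rho> c h"
  using lux_le_of_modular_le_one[of c h] by (meson not_le)

lemma modular_le_one_of_lux_less:
  assumes "f \<in> orlicz_space M" "lux f < c"
  shows "\<rho> c f \<le> 1"
proof -
  obtain x where "0 < x" "\<rho> x f \<le> 1" "x < c"
    using cInf_lessD[OF luxemburg_set_nonempty[OF assms(1)]] assms(2)
    unfolding luxemburg_norm_def by blast
  then show ?thesis using modular_antimono[of x c f] by auto
qed

lemma lux_mono:
  assumes "k \<in> orlicz_space M" "\<And>c. 0 < c \<Longrightarrow> \<rho> c h \<le> \<rho> c k"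
  shows "lux h \<le> lux k"
  unfolding luxemburg_norm_def[of M k]
proof (rule cInf_greatest[OF luxemburg_set_nonempty[OF assms(1)]])
  fix c assume "c \<in> {c. 0 < c \<and> \<rho> c k \<le> 1}"
  then show "lux h \<le> c" using assms(2)[of c] by (intro lux_le_of_modular_le_one) auto
qed

lemma modular_lux_le_one:
  assumes f: "f \<in> orlicz_space M" and pos: "0 < lux f"
  shows "\<rho> (lux f) f \<le> 1"
proof (rule ccontr)
  obtain C where C: "1 \<le> C" "\<And>x. 0 \<le> x \<Longrightarrow> M (2 * x) \<le> C * M x"
    using delta2_const by blast
  obtain r where r: "\<rho> (lux f) f = ennreal r" "0 \<le> r"
    using orlicz_space_modular_finite[OF f pos] by (cases "\<rho> (lux f) f") auto
  assume "\<not> \<rho> (lux f) f \<le> 1"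
  then have "1 < r" using r by simp
  define \<theta> where "\<theta> = min 1 ((r - 1) / (2 * C))"
  have \<theta>: "0 < \<theta>" "\<theta> \<le> 1" using \<open>1 < r\<close> C(1) unfolding \<theta>_def by auto
  have "\<theta> * (C - 1) \<le> (r - 1) / 2"
    using C(1) \<theta> unfolding \<theta>_def by (auto simp: min_def field_simps)
  then have small: "1 + \<theta> * (C - 1) < r" using \<open>1 < r\<close> by simp
  have "\<rho> (lux f) f = \<rho> ((lux f * (1 + \<theta>)) / (1 + \<theta>)) f" using \<theta> by simp
  also have "\<dots> \<le> ennreal (1 + \<theta> * (C - 1)) * \<rho> (lux f * (1 + \<theta>)) f"
    using f pos \<theta> C by (intro modular_grow orlicz_space_measurable) auto
  also have "\<dots> \<le> ennreal (1 + \<theta> * (C - 1)) * 1"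
    using f pos \<theta> by (intro mult_left_mono modular_le_one_of_lux_less) auto
  finally have "ennreal r \<le> ennreal (1 + \<theta> * (C - 1))" by (simp only: r mult_1_right)
  then show False using small \<theta> C(1) by (subst (asm) ennreal_le_iff) auto
qed


lemma lux_less_of_modular_less_one:
  assumes f: "f \<in> orlicz_space M" and c: "0 < c" and less: "\<rho> c f < 1"
  shows "lux f < c"
proof -
  obtain C where C: "1 \<le> C" "\<And>x. 0 \<le> x \<Longrightarrow> M (2 * x) \<le> C * M x"
    using delta2_const by blast
  obtain r where r: "\<rho> c f = ennreal r" "0 \<le> r"
    using orlicz_space_modular_finite[OF f c] by (cases "\<rho> c f") auto
  then have "r < 1" using less by simp
  define \<theta> where "\<theta> = min 1 ((1 - r) / C)"
  have \<theta>: "0 < \<theta>" "\<theta> \<le> 1" using \<open>r < 1\<close> C(1) unfolding \<theta>_def by auto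
  have "\<theta> * C \<le> 1 - r" using C(1) unfolding \<theta>_def by (auto simp: min_def field_simps)
  moreover have "\<theta> * (C - 1) * r \<le> \<theta> * (C - 1) * 1"
    using \<theta> C(1) r(2) \<open>r < 1\<close> by (intro mult_left_mono) auto
  ultimately have small: "(1 + \<theta> * (C - 1)) * r \<le> 1"
    using \<theta> by (simp add: algebra_simps)
  have "\<rho> (c / (1 + \<theta>)) f \<le> ennreal (1 + \<theta> * (C - 1)) * \<rho> c f"
    using f c \<theta> C by (intro modular_grow orlicz_space_measurable) auto
  also have "\<dots> = ennreal ((1 + \<theta> * (C - 1)) * r)" using r \<theta> C(1) by (simp add: ennreal_mult)
  also have "\<dots> \<le> 1" using small by simp
  finally have "lux f \<le> c / (1 + \<theta>)" using c \<theta> by (intro lux_le_of_modular_le_one) auto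
  also have "\<dots> < c" using c \<theta> by (simp add: field_simps)
  finally show ?thesis .
qed


lemma orlicz_space_finite_distrib:
  assumes f: "f \<in> orlicz_space M"
  shows "finite_distrib f"
  unfolding finite_distrib_def
proof (intro conjI allI impI)
  show meas: "f \<in> borel_measurable lebesgue" using f by (rule orlicz_space_measurable)
  fix l :: real assume "0 < l"
  let ?A = "{s\<in>{0<..}. l < \<bar>f s\<bar>}"
  have "ennreal (M l) * distrib_fun f l = (\<integral>\<^sup>+x\<in>?A. ennreal (M l) \<partial>lebesgue)"
    unfolding distrib_fun_def using meas by (intro nn_integral_cmult_indicator[symmetric]) measurable
  also have "\<dots> \<le> \<rho> 1 f"
    unfolding orlicz_modular_def
    using \<open>0 < l\<close> by (intro nn_integral_mono) (auto simp: indicator_def intro!: ennreal_leI M_le)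
  also have "\<dots> < \<infinity>" by (rule orlicz_space_modular_finite[OF f]) simp
  finally show "distrib_fun f l < \<infinity>"
    using M_pos[OF \<open>0 < l\<close>] by (auto simp: ennreal_mult_less_top)
qed

lemma modular_eq_of_distrib_fun_eq:
  fixes h k :: "real \<Rightarrow> real"
  assumes hk[measurable]: "h \<in> borel_measurable lebesgue" "k \<in> borel_measurable lebesgue"
    and "0 < c" and eq: "\<And>l. 0 < l \<Longrightarrow> distrib_fun h l = distrib_fun k l"
  shows "\<rho> c h = \<rho> c k"
proof -
  have layer_cake: "\<rho> c u = (\<integral>\<^sup>+y\<in>{0<..}. emeasure lebesgue {x\<in>{0<..}. y < M (\<bar>u x\<bar> / c)} \<partial>lborel)"
    if [measurable]: "u \<in> borel_measurable lebesgue" for u :: "real \<Rightarrow> real"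
    unfolding orlicz_modular_def using \<open>0 < c\<close> by (intro lebesgue.nn_integral_layer_cake) measurable
  have level_set: "{x\<in>{0<..}. y < M (\<bar>u x\<bar> / c)} = {s\<in>{0<..}. c * a < \<bar>u s\<bar>}"
    if "0 < a" "M a = y" for y a and u :: "real \<Rightarrow> real"
    using that \<open>0 < c\<close> M_less_iff[of a "\<bar>u _\<bar> / c"] by (auto simp: field_simps)
  show ?thesis unfolding layer_cake[OF hk(1)] layer_cake[OF hk(2)]
  proof (intro nn_integral_cong)
    fix y :: real
    show "emeasure lebesgue {x\<in>{0<..}. y < M (\<bar>h x\<bar> / c)} * indicator {0<..} y =
          emeasure lebesgue {x\<in>{0<..}. y < M (\<bar>k x\<bar> / c)} * indicator {0<..} y"
    proof (cases "0 < y")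
      case True
      then obtain a where "0 < a" "M a = y" using M_surj by blast
      then show ?thesis
        using eq[of "c * a"] \<open>0 < c\<close> unfolding level_set[OF \<open>0 < a\<close> \<open>M a = y\<close>] distrib_fun_def
        by simp
    qed simp
  qed
qed

lemma modular_rearr:
  assumes "f \<in> orlicz_space M" "0 < c"
  shows "\<rho> c (rearr f) = \<rho> c f"
  using assms orlicz_space_finite_distrib[OF assms(1)]
  by (intro modular_eq_of_distrib_fun_eq rearr_measurable orlicz_space_measurable distrib_fun_rearr)

lemma modular_rearr_trunc_le:
  assumes "f \<in> orlicz_space M" "0 < c"
  shows "\<rho> c (rearr_trunc f s) \<le> \<rho> c f"
proof -
  have "\<rho> c (rearr_trunc f s) \<le> \<rho> c (rearr f)"
    using \<open>0 < c\<close> by (intro modular_mono) (auto simp: rearr_trunc_def)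
  then show ?thesis using modular_rearr[OF assms] by simp
qed

lemma rearr_trunc_in_orlicz_space:
  assumes "f \<in> orlicz_space M"
  shows "rearr_trunc f s \<in> orlicz_space M"
proof (rule orlicz_spaceI)
  show "rearr_trunc f s \<in> borel_measurable lebesgue"
    using assms by (intro rearr_trunc_measurable orlicz_space_finite_distrib)
  show "\<rho> 1 (rearr_trunc f s) < \<infinity>"
    using modular_rearr_trunc_le[OF assms(1)] orlicz_space_modular_finite[OF assms(1)]
    by (meson le_less_trans zero_less_one)
qed simp

lemma lux_rearr_trunc_le: "f \<in> orlicz_space M \<Longrightarrow> lux (rearr_trunc f s) \<le> lux f"
  by (intro lux_mono modular_rearr_trunc_le)

lemma lux_rearr_trunc_mono:
  assumes f: "f \<in> orlicz_space M" and g: "finite_distrib g"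
    and le: "\<And>t. 0 < t \<Longrightarrow> t < s \<Longrightarrow> rearr g t \<le> rearr f t"
  shows "lux (rearr_trunc g s) \<le> lux (rearr_trunc f s)"
proof (rule lux_mono)
  show "rearr_trunc f s \<in> orlicz_space M" by (rule rearr_trunc_in_orlicz_space[OF f])
  fix c :: real assume "0 < c"
  then show "\<rho> c (rearr_trunc g s) \<le> \<rho> c (rearr_trunc f s)"
    using le rearr_nonneg[OF g] rearr_nonneg[OF orlicz_space_finite_distrib[OF f]]
    by (intro modular_mono) (auto simp: rearr_trunc_def)
qed

lemma modular_combination_mono:
  fixes h\<^sub>1 h\<^sub>2 k\<^sub>1 k\<^sub>2 :: "real \<Rightarrow> real"
  assumes meas: "h\<^sub>1 \<in> borel_measurable lebesgue" "h\<^sub>2 \<in> borel_measurable lebesgue"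
    "k\<^sub>1 \<in> borel_measurable lebesgue" "k\<^sub>2 \<in> borel_measurable lebesgue"
    and "0 < a" "0 < b" "0 \<le> K"
    and le: "\<And>x. 0 < x \<Longrightarrow> M (\<bar>h\<^sub>1 x\<bar> / a) + K * M (\<bar>h\<^sub>2 x\<bar> / b) \<le> M (\<bar>k\<^sub>1 x\<bar> / a) + K * M (\<bar>k\<^sub>2 x\<bar> / b)"
  shows "\<rho> a h\<^sub>1 + ennreal K * \<rho> b h\<^sub>2 \<le> \<rho> a k\<^sub>1 + ennreal K * \<rho> b k\<^sub>2"
proof -
  let ?F = "\<lambda>u v x. ennreal (M (\<bar>u x\<bar> / a)) * indicator {0<..} x
    + ennreal K * (ennreal (M (\<bar>v x\<bar> / b)) * indicator {0<..} x)"
  have integral_F: "integral\<^sup>N lebesgue (?F u v) = \<rho> a u + ennreal K * \<rho> b v"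
    if "u \<in> borel_measurable lebesgue" "v \<in> borel_measurable lebesgue" for u v
    unfolding orlicz_modular_def using that \<open>0 < a\<close> \<open>0 < b\<close>
    by (simp add: nn_integral_add nn_integral_cmult modular_integrand_measurable)
  have "?F h\<^sub>1 h\<^sub>2 x \<le> ?F k\<^sub>1 k\<^sub>2 x" for x
  proof (cases "0 < x")
    case True
    have "ennreal (M (\<bar>h\<^sub>1 x\<bar> / a) + K * M (\<bar>h\<^sub>2 x\<bar> / b)) \<le> ennreal (M (\<bar>k\<^sub>1 x\<bar> / a) + K * M (\<bar>k\<^sub>2 x\<bar> / b))"
      using le[OF True] by (rule ennreal_leI)
    then show ?thesis using True \<open>0 < a\<close> \<open>0 < b\<close> \<open>0 \<le> K\<close>
      by (simp add: M_nonneg ennreal_plus[symmetric] ennreal_mult[symmetric] del: ennreal_plus)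
  qed simp
  then have "integral\<^sup>N lebesgue (?F h\<^sub>1 h\<^sub>2) \<le> integral\<^sup>N lebesgue (?F k\<^sub>1 k\<^sub>2)"
    by (intro nn_integral_mono)
  then show ?thesis using meas by (simp only: integral_F)
qed

end

locale orlicz_ratio = orlicz +
  assumes M_differentiable: "\<And>x. 0 < x \<Longrightarrow> M differentiable (at x)"
    and deriv_pos: "\<And>x. 0 < x \<Longrightarrow> 0 < deriv M x"
    and deriv_ratio_antimono: "\<And>e x y. 0 < e \<Longrightarrow> e < 1 \<Longrightarrow> 0 < x \<Longrightarrow> x \<le> y \<Longrightarrow>
      deriv M (e * y) / deriv M y \<le> deriv M (e * x) / deriv M x"
begin

lemma M_has_deriv: "0 < x \<Longrightarrow> (M has_real_derivative deriv M x) (at x)"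
  using M_differentiable DERIV_deriv_iff_real_differentiable by blast

lemma scaled_diff_has_deriv:
  assumes "0 < x" "0 < e"
  shows "((\<lambda>x. M (e * x) - K * M x) has_real_derivative e * deriv M (e * x) - K * deriv M x) (at x)"
proof -
  have "((\<lambda>x. M (e * x)) has_real_derivative deriv M (e * x) * e) (at x)"
    using assms by (intro DERIV_chain2[of M] M_has_deriv) (auto intro!: derivative_eq_intros)
  then show ?thesis
    using DERIV_diff[OF _ DERIV_cmult[OF M_has_deriv[OF \<open>0 < x\<close>], of K]] by (simp add: mult.commute)
qed

lemma scaled_diff_continuous_on: "0 \<le> e \<Longrightarrow> continuous_on {0..} (\<lambda>x. M (e * x) - K * M x)"
  by (intro continuous_intros continuous_on_compose2[OF M_continuous] M_continuous) auto

text \<open>With \<open>K\<close> as below, the derivative of \<open>M(e x) - K M(x)\<close> is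
  \<open>e M'(x) (r(x) - r(W))\<close> for the nonincreasing ratio \<open>r(x) = M'(e x) / M'(x)\<close>,
  so the function increases up to \<open>W\<close> and decreases afterwards.\<close>

lemma scaled_diff_deriv_eq:
  assumes "0 < x"
  shows "e * deriv M (e * x) - e * deriv M (e * W) / deriv M W * deriv M x =
    e * deriv M x * (deriv M (e * x) / deriv M x - deriv M (e * W) / deriv M W)"
  using deriv_pos[OF assms] by (simp add: field_simps)

lemma scaled_diff_decreasing:
  assumes "0 < e" "e < 1" "0 < W" "W \<le> b" "b \<le> a"
  defines "K \<equiv> e * deriv M (e * W) / deriv M W"
  shows "M (e * a) - K * M a \<le> M (e * b) - K * M b"
proof (rule DERIV_nonpos_imp_decreasing_open[OF \<open>b \<le> a\<close>])
  fix x assume x: "b < x" "x < a"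
  then have "0 < x" using assms by linarith
  have "deriv M (e * x) / deriv M x \<le> deriv M (e * W) / deriv M W"
    using assms x by (intro deriv_ratio_antimono) auto
  then have "e * deriv M (e * x) - K * deriv M x \<le> 0"
    unfolding K_def scaled_diff_deriv_eq[OF \<open>0 < x\<close>]
    using deriv_pos[OF \<open>0 < x\<close>] \<open>0 < e\<close> by (intro mult_nonneg_nonpos) auto
  then show "\<exists>y. ((\<lambda>x. M (e * x) - K * M x) has_real_derivative y) (at x) \<and> y \<le> 0"
    using scaled_diff_has_deriv[OF \<open>0 < x\<close> \<open>0 < e\<close>] by blast
next
  show "continuous_on {b..a} (\<lambda>x. M (e * x) - K * M x)"
    using assms by (intro continuous_on_subset[OF scaled_diff_continuous_on]) auto
qed

lemma scaled_diff_increasing: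
  assumes "0 < e" "e < 1" "0 \<le> a" "a \<le> b" "b \<le> W"
  defines "K \<equiv> e * deriv M (e * W) / deriv M W"
  shows "M (e * a) - K * M a \<le> M (e * b) - K * M b"
proof (rule DERIV_nonneg_imp_increasing_open[OF \<open>a \<le> b\<close>])
  fix x assume x: "a < x" "x < b"
  then have "0 < x" using assms by linarith
  have "deriv M (e * W) / deriv M W \<le> deriv M (e * x) / deriv M x"
    using assms x by (intro deriv_ratio_antimono) auto
  then have "0 \<le> e * deriv M (e * x) - K * deriv M x"
    unfolding K_def scaled_diff_deriv_eq[OF \<open>0 < x\<close>]
    using deriv_pos[OF \<open>0 < x\<close>] \<open>0 < e\<close> by (intro mult_nonneg_nonneg) auto
  then show "\<exists>y. ((\<lambda>x. M (e * x) - K * M x) has_real_derivative y) (at x) \<and> 0 \<le> y"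
    using scaled_diff_has_deriv[OF \<open>0 < x\<close> \<open>0 < e\<close>] by blast
next
  show "continuous_on {a..b} (\<lambda>x. M (e * x) - K * M x)"
    using assms by (intro continuous_on_subset[OF scaled_diff_continuous_on]) auto
qed


lemma crossing_pointwise:
  assumes f: "f \<in> orlicz_space M" and g: "g \<in> orlicz_space M"
    and NP: "\<And>t. 0 < t \<Longrightarrow> t \<le> t\<^sub>0 \<Longrightarrow> rearr g t \<le> rearr f t"
            "\<And>t. 0 < t \<Longrightarrow> t\<^sub>0 \<le> t \<Longrightarrow> rearr f t \<le> rearr g t"
    and "0 < t\<^sub>0" "t\<^sub>0 < s" "0 < rearr g t\<^sub>0" "0 < c\<^sub>1" "c\<^sub>1 < c\<^sub>2" "0 < t"
  defines "e \<equiv> c\<^sub>1 / c\<^sub>2" and "W \<equiv> rearr g t\<^sub>0 / c\<^sub>1"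
  defines "K \<equiv> e * deriv M (e * W) / deriv M W"
  shows "M (\<bar>rearr f t\<bar> / c\<^sub>2) + K * M (\<bar>rearr_trunc g s t\<bar> / c\<^sub>1)
    \<le> M (\<bar>rearr g t\<bar> / c\<^sub>2) + K * M (\<bar>rearr_trunc f s t\<bar> / c\<^sub>1)"
proof -
  have f': "finite_distrib f" and g': "finite_distrib g"
    using f g by (auto intro: orlicz_space_finite_distrib)
  have e: "0 < e" "e < 1" using assms unfolding e_def by auto
  show ?thesis
  proof (cases "t < s")
    case True
    define a where "a = rearr f t / c\<^sub>1"
    define b where "b = rearr g t / c\<^sub>1"
    have "0 \<le> a" unfolding a_def using rearr_nonneg[OF f' \<open>0 < t\<close>] \<open>0 < c\<^sub>1\<close> by simp
    have terms: "\<bar>rearr f t\<bar> / c\<^sub>2 = e * a" "\<bar>rearr g t\<bar> / c\<^sub>2 = e * b"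
      "\<bar>rearr_trunc f s t\<bar> / c\<^sub>1 = a" "\<bar>rearr_trunc g s t\<bar> / c\<^sub>1 = b"
      using True \<open>0 < c\<^sub>1\<close> \<open>c\<^sub>1 < c\<^sub>2\<close> rearr_nonneg[OF f' \<open>0 < t\<close>] rearr_nonneg[OF g' \<open>0 < t\<close>]
      unfolding a_def b_def e_def rearr_trunc_def by auto
    have "M (e * a) - K * M a \<le> M (e * b) - K * M b"
    proof (cases "t \<le> t\<^sub>0")
      case True
      then have "W \<le> b" "b \<le> a"
        using rearr_antimono[OF g' \<open>0 < t\<close>] NP(1)[OF \<open>0 < t\<close>] \<open>0 < c\<^sub>1\<close>
        unfolding W_def a_def b_def by (auto intro: divide_right_mono)
      then show ?thesis
        using e assms unfolding K_def W_def by (intro scaled_diff_decreasing) auto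
    next
      case False
      then have "b \<le> W" "a \<le> b"
        using rearr_antimono[OF g' \<open>0 < t\<^sub>0\<close>, of t] NP(2)[OF \<open>0 < t\<close>] \<open>0 < c\<^sub>1\<close>
        unfolding W_def a_def b_def by (auto intro: divide_right_mono)
      then show ?thesis using e \<open>0 \<le> a\<close> unfolding K_def by (intro scaled_diff_increasing) auto
    qed
    then show ?thesis unfolding terms by simp
  next
    case False
    then have "rearr f t \<le> rearr g t" using NP(2)[OF \<open>0 < t\<close>] \<open>t\<^sub>0 < s\<close> by simp
    then have "M (\<bar>rearr f t\<bar> / c\<^sub>2) \<le> M (\<bar>rearr g t\<bar> / c\<^sub>2)"
      using rearr_nonneg[OF f' \<open>0 < t\<close>] \<open>0 < c\<^sub>1\<close> \<open>c\<^sub>1 < c\<^sub>2\<close> by (intro M_le divide_right_mono) auto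
    then show ?thesis using False by (simp add: rearr_trunc_def M_zero)
  qed
qed

lemma modular_less_of_crossing:
  assumes f: "f \<in> orlicz_space M" and g: "g \<in> orlicz_space M"
    and NP: "\<And>t. 0 < t \<Longrightarrow> t \<le> t\<^sub>0 \<Longrightarrow> rearr g t \<le> rearr f t"
            "\<And>t. 0 < t \<Longrightarrow> t\<^sub>0 \<le> t \<Longrightarrow> rearr f t \<le> rearr g t"
    and "0 < t\<^sub>0" "t\<^sub>0 < s" "0 < rearr g t\<^sub>0" "0 < c\<^sub>1" "c\<^sub>1 < c\<^sub>2"
    and f_le: "\<rho> c\<^sub>1 (rearr_trunc f s) \<le> 1" and g_gt: "1 < \<rho> c\<^sub>1 (rearr_trunc g s)"
  shows "\<rho> c\<^sub>2 f < \<rho> c\<^sub>2 g"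
proof -
  define e where "e = c\<^sub>1 / c\<^sub>2"
  define W where "W = rearr g t\<^sub>0 / c\<^sub>1"
  define K where "K = e * deriv M (e * W) / deriv M W"
  have "0 < K" using assms deriv_pos unfolding K_def W_def e_def by auto
  have "\<rho> c\<^sub>2 (rearr f) + ennreal K * \<rho> c\<^sub>1 (rearr_trunc g s)
    \<le> \<rho> c\<^sub>2 (rearr g) + ennreal K * \<rho> c\<^sub>1 (rearr_trunc f s)"
    using assms \<open>0 < K\<close> orlicz_space_finite_distrib[OF f] orlicz_space_finite_distrib[OF g]
    unfolding K_def W_def e_def
    by (intro modular_combination_mono crossing_pointwise rearr_measurable rearr_trunc_measurable) auto
  then have combined: "\<rho> c\<^sub>2 f + ennreal K * \<rho> c\<^sub>1 (rearr_trunc g s)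
    \<le> \<rho> c\<^sub>2 g + ennreal K * \<rho> c\<^sub>1 (rearr_trunc f s)"
    using assms by (simp add: modular_rearr)
  have "\<rho> c\<^sub>2 g < \<infinity>"
    by (rule orlicz_space_modular_finite[OF g]) (use assms in linarith)
  moreover have "\<rho> c\<^sub>1 (rearr_trunc g s) < \<infinity>"
    by (rule orlicz_space_modular_finite[OF rearr_trunc_in_orlicz_space[OF g] \<open>0 < c\<^sub>1\<close>])
  ultimately show ?thesis by (rule ennreal_less_of_add_mult_le[OF combined f_le g_gt _ _ \<open>0 < K\<close>])
qed

lemma lux_rearr_trunc_mono_of_crossing:
  assumes f: "f \<in> orlicz_space M" and g: "g \<in> orlicz_space M"
    and NP: "\<And>t. 0 < t \<Longrightarrow> t \<le> t\<^sub>0 \<Longrightarrow> rearr g t \<le> rearr f t"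
            "\<And>t. 0 < t \<Longrightarrow> t\<^sub>0 \<le> t \<Longrightarrow> rearr f t \<le> rearr g t"
    and "0 < t\<^sub>0" and t\<^sub>1: "0 < t\<^sub>1" "t\<^sub>1 < s" "rearr f t\<^sub>1 < rearr g t\<^sub>1"
    and lux_order: "lux g \<le> lux f"
  shows "lux (rearr_trunc g s) \<le> lux (rearr_trunc f s)"
proof (rule ccontr)
  have "t\<^sub>0 < t\<^sub>1" using NP(1)[OF \<open>0 < t\<^sub>1\<close>] t\<^sub>1 by force
  then have "0 < rearr g t\<^sub>0"
    using rearr_antimono[of g t\<^sub>0 t\<^sub>1] rearr_nonneg[of f t\<^sub>1] t\<^sub>1 \<open>0 < t\<^sub>0\<close> f g
    by (auto dest!: orlicz_space_finite_distrib)
  assume "\<not> lux (rearr_trunc g s) \<le> lux (rearr_trunc f s)"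
  define c where "c = (lux (rearr_trunc f s) + lux (rearr_trunc g s)) / 2"
  have trunc: "rearr_trunc f s \<in> orlicz_space M" "rearr_trunc g s \<in> orlicz_space M"
    using f g by (auto intro: rearr_trunc_in_orlicz_space)
  have c: "lux (rearr_trunc f s) < c" "c < lux (rearr_trunc g s)"
    using \<open>\<not> _ \<le> _\<close> unfolding c_def by auto
  moreover have "0 < c" using lux_nonneg[OF trunc(1)] c by linarith
  moreover have "c < lux g" using c lux_rearr_trunc_le[OF g, of s] by linarith
  ultimately have "\<rho> (lux g) f < \<rho> (lux g) g"
    using assms \<open>t\<^sub>0 < t\<^sub>1\<close> \<open>0 < rearr g t\<^sub>0\<close> trunc
    by (intro modular_less_of_crossing[where s = s and c\<^sub>1 = c and t\<^sub>0 = t\<^sub>0]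
        modular_le_one_of_lux_less one_less_modular_of_less_lux) auto
  also have "\<dots> \<le> 1" using \<open>0 < c\<close> \<open>c < lux g\<close> by (intro modular_lux_le_one g) auto
  finally have "lux f < lux g" using \<open>0 < c\<close> \<open>c < lux g\<close> by (intro lux_less_of_modular_less_one f) auto
  then show False using lux_order by simp
qed

end

lemma orlicz_function_pos_of_deriv_pos:
  assumes "orlicz_function M" "\<forall>x>0. M differentiable (at x)" "\<forall>x>0. deriv M x > 0" "0 < u"
  shows "0 < M u"
proof -
  have "M (u / 2) < M u"
  proof (rule DERIV_pos_imp_increasing[of "u / 2" u M])
    fix x assume "u / 2 \<le> x" "x \<le> u"
    then show "\<exists>y. (M has_real_derivative y) (at x) \<and> 0 < y"
      using assms DERIV_deriv_iff_real_differentiable by (metis half_gt_zero order_less_le_trans)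
  qed (use \<open>0 < u\<close> in simp)
  moreover have "0 \<le> M (u / 2)" using assms by (simp add: orlicz_function_def)
  ultimately show ?thesis by linarith
qed

theorem mainTheorem17:
  fixes M :: "real \<Rightarrow> real"
  assumes "orlicz_function M"
    and "delta2 M"
    and "\<forall>x>0. M differentiable (at x)"
    and "\<forall>x>0. deriv M x > 0"
    and "\<forall>\<epsilon>. 0 < \<epsilon> \<and> \<epsilon> < 1 \<longrightarrow>
           (\<forall>x y. 0 < x \<and> x \<le> y \<longrightarrow> deriv M (\<epsilon> * y) / deriv M y \<le> deriv M (\<epsilon> * x) / deriv M x)"
  shows "class_X (orlicz_space M) (luxemburg_norm M)"
proof -
  interpret orlicz_ratio M
    using assms orlicz_function_pos_of_deriv_pos[OF assms(1,3,4)] by unfold_locales auto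
  show ?thesis unfolding class_X_def
  proof (intro allI impI)
    fix f g :: "real \<Rightarrow> real" and s :: real
    assume H: "f \<in> orlicz_space M \<and> g \<in> orlicz_space M \<and> NP_condition f g \<and> lux g \<le> lux f"
      and "0 < s"
    then have f: "f \<in> orlicz_space M" and g: "g \<in> orlicz_space M" by auto
    obtain t\<^sub>0 where "0 < t\<^sub>0" and NP: "\<And>t. 0 < t \<Longrightarrow> t \<le> t\<^sub>0 \<Longrightarrow> rearr g t \<le> rearr f t"
      "\<And>t. 0 < t \<Longrightarrow> t\<^sub>0 \<le> t \<Longrightarrow> rearr f t \<le> rearr g t"
      using H unfolding NP_condition_def by blast
    show "lux (rearr_trunc g s) \<le> lux (rearr_trunc f s)"
    proof (cases "\<forall>t. 0 < t \<and> t < s \<longrightarrow> rearr g t \<le> rearr f t")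
      case True
      then show ?thesis
        using f g by (intro lux_rearr_trunc_mono orlicz_space_finite_distrib) auto
    next
      case False
      then obtain t\<^sub>1 where "0 < t\<^sub>1" "t\<^sub>1 < s" "rearr f t\<^sub>1 < rearr g t\<^sub>1" by auto
      with H show ?thesis by (intro lux_rearr_trunc_mono_of_crossing[OF f g NP \<open>0 < t\<^sub>0\<close>]) auto
    qed
  qed
qed

end
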